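(* Let $M_\varphi$ be a hyperbolic once-punctured torus bundle with fibre $S$. For any irreducible representation $\rho\colon\pi_1(S)\to\mathrm{SL}(2,\mathbb{C})$ whose character $\chi_\rho$ lies in $X_\varphi(S)$, there exists $T\in\mathrm{SL}(2,\mathbb{C})$ such that $T^{-1}\rho(\gamma)T=\rho(\varphi(\gamma))$ for all $\gamma\in\pi_1(S)$. Moreover, $T$ is unique up to sign, and at least one of $\operatorname{tr}T$, $\operatorname{tr}(\rho(a)T)$, $\operatorname{tr}(\rho(b)T)$, $\operatorname{tr}(\rho(ab)T)$ is nonzero.
   Context: $\pi_1(S)$ is free on $a,b$ and $\varphi$ denotes the automorphism of $\pi_1(S)$ induced by the monodromy. $X(S)\cong\mathbb{C}^3$ is the $\mathrm{SL}(2,\mathbb{C})$-character variety of $\pi_1(S)$ with coordinates $(\operatorname{tr}\rho(a),\operatorname{tr}\rho(b),\operatorname{tr}\rho(ab))$, and $X_\varphi(S)=\{\chi\in X(S):\chi=\chi\circ\varphi\}$. *)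

theory Defs
  imports "HOL-Analysis.Analysis"
begin

datatype gen = Ga | Gb

text \<open>A letter is a generator together with an exponent sign: True = +1, False = -1.
  Elements of the free group pi_1(S) = F(a,b) are represented by words (lists of letters);
  two words represent the same element iff their free reductions agree.\<close>

type_synonym letter = "gen \<times> bool"
type_synonym word = "letter list"

definition inv_letter :: "letter \<Rightarrow> letter" where
  "inv_letter l = (fst l, \<not> snd l)"

definition inv_word :: "word \<Rightarrow> word" where
  "inv_word w = rev (map inv_letter w)"

fun fred :: "word \<Rightarrow> word" where
  "fred [] = []"
| "fred (x # xs) = (case fred xs of
      [] \<Rightarrow> [x]
    | y # ys \<Rightarrow> (if y = inv_letter x then ys else x # y # ys))"

definition word_a :: word where "word_a = [(Ga, True)]"
definition word_b :: word where "word_b = [(Gb, True)]"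

definition subst :: "word \<Rightarrow> word \<Rightarrow> word \<Rightarrow> word" where
  "subst wa wb w = concat (map (\<lambda>l. let img = (if fst l = Ga then wa else wb)
                                     in if snd l then img else inv_word img) w)"

definition is_free_aut :: "word \<Rightarrow> word \<Rightarrow> bool" where
  "is_free_aut wa wb \<longleftrightarrow> (\<exists>va vb.
      fred (subst wa wb va) = word_a \<and> fred (subst wa wb vb) = word_b \<and>
      fred (subst va vb wa) = word_a \<and> fred (subst va vb wb) = word_b)"

text \<open>Exponent sum of a generator in a word (abelianisation H_1(S) = Z^2).\<close>
definition expsum :: "gen \<Rightarrow> word \<Rightarrow> int" where
  "expsum g w = (\<Sum>l\<leftarrow>w. if fst l = g then (if snd l then 1 else -1) else 0)"

text \<open>The once-punctured torus bundle with monodromy inducing the automorphism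
  (a \<mapsto> wa, b \<mapsto> wb) is hyperbolic: the monodromy is orientation preserving
  (action on H_1 has determinant 1) and Anosov (|trace| > 2).\<close>
definition hyperbolic_monodromy :: "word \<Rightarrow> word \<Rightarrow> bool" where
  "hyperbolic_monodromy wa wb \<longleftrightarrow> is_free_aut wa wb \<and>
     expsum Ga wa * expsum Gb wb - expsum Gb wa * expsum Ga wb = 1 \<and>
     \<bar>expsum Ga wa + expsum Gb wb\<bar> > 2"

type_synonym mat2 = "complex^2^2"

definition SL2 :: "mat2 set" where
  "SL2 = {M. det M = 1}"

text \<open>A representation rho of F(a,b) is determined by rho(a) = A, rho(b) = B in SL(2,C).\<close>
definition rep_letter :: "mat2 \<Rightarrow> mat2 \<Rightarrow> letter \<Rightarrow> mat2" where
  "rep_letter A B l = (let M = (if fst l = Ga then A else B) in if snd l then M else matrix_inv M)"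

definition rep :: "mat2 \<Rightarrow> mat2 \<Rightarrow> word \<Rightarrow> mat2" where
  "rep A B w = foldr (\<lambda>l M. rep_letter A B l ** M) w (mat 1)"

definition irreducible_rep :: "mat2 \<Rightarrow> mat2 \<Rightarrow> bool" where
  "irreducible_rep A B \<longleftrightarrow>
     \<not> (\<exists>v::complex^2. v \<noteq> 0 \<and> (\<forall>w. \<exists>c::complex. rep A B w *v v = c *s v))"

text \<open>The character of rho lies in X_phi(S): chi_rho = chi_rho o phi.\<close>
definition char_fixed :: "word \<Rightarrow> word \<Rightarrow> mat2 \<Rightarrow> mat2 \<Rightarrow> bool" where
  "char_fixed wa wb A B \<longleftrightarrow> (\<forall>w. trace (rep A B w) = trace (rep A B (subst wa wb w)))"

end

theory Submission
  imports Defs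
begin

(* Write A, B for rho(a), rho(b) and A', B' for their images under phi.  A pair in SL(2,C)
   without a common eigenvector is conjugate to a normal form written in the basis (v, A v),
   where v is an eigenvector of B; its entries depend only on tr A, tr B, tr AB and on the
   eigenvalue of v.  Since phi is an automorphism, (A', B') again has no common eigenvector,
   and chi = chi o phi gives it the same three traces; so both pairs have the same normal form
   and are conjugate by some T, which may be rescaled into SL(2,C).  Two such T differ by a
   matrix commuting with A and B, which is a scalar by Schur's lemma, hence is +1 or -1.
   Finally, the normal form shows that 1, A, B, AB span all 2x2 matrices, so T cannot be
   orthogonal to all four for the nondegenerate trace pairing. *)

lemma
  fixes A :: "'a::field^'n^'n"
  assumes "det A \<noteq> 0"
  shows matrix_inv_right: "A ** matrix_inv A = mat 1"
    and matrix_inv_left: "matrix_inv A ** A = mat 1"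
proof -
  have "\<exists>A'. A ** A' = mat 1 \<and> A' ** A = mat 1"
    using assms by (simp add: invertible_det_nz[symmetric] invertible_def)
  then have "A ** matrix_inv A = mat 1 \<and> matrix_inv A ** A = mat 1"
    unfolding matrix_inv_def by (rule someI_ex)
  then show "A ** matrix_inv A = mat 1" "matrix_inv A ** A = mat 1"
    by auto
qed

lemma matrix_inv_unique:
  fixes A X :: "'a::field^'n^'n"
  assumes "det A \<noteq> 0" and "A ** X = mat 1"
  shows "matrix_inv A = X"
proof -
  have "matrix_inv A = matrix_inv A ** (A ** X)"
    using assms(2) by simp
  also have "\<dots> = X"
    by (simp add: matrix_mul_assoc matrix_inv_left[OF assms(1)])
  finally show ?thesis .
qed

lemma det_matrix_inv:
  fixes A :: "'a::field^'n^'n"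
  assumes "det A \<noteq> 0"
  shows "det (matrix_inv A) = inverse (det A)"
  using det_mul[of A "matrix_inv A"] assms by (simp add: matrix_inv_right field_simps)

lemma matrix_inv_matrix_inv:
  fixes A :: "'a::field^'n^'n"
  assumes "det A \<noteq> 0"
  shows "matrix_inv (matrix_inv A) = A"
  using assms by (intro matrix_inv_unique) (simp_all add: det_matrix_inv matrix_inv_left)

lemma mat_mult_commute: "mat c ** (A::'a::comm_semiring_1^'n^'n) = A ** mat c"
  by (simp add: vec_eq_iff matrix_matrix_mult_def mat_def if_distrib if_distribR
      mult.commute cong: if_cong)

lemma matrix_diff_ldistrib: "(A::'a::ring_1^'n^'m) ** (B - C) = A ** B - A ** C"
  by (vector matrix_matrix_mult_def sum_subtractf right_diff_distrib)

lemma matrix_diff_rdistrib: "((A::'a::ring_1^'n^'m) - B) ** C = A ** C - B ** C"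
  by (vector matrix_matrix_mult_def sum_subtractf left_diff_distrib)

lemma mat_neg_one_mult: "mat (-1) ** (A::'a::ring_1^'n^'m) = - A"
  by (simp add: vec_eq_iff matrix_matrix_mult_def mat_def if_distrib if_distribR cong: if_cong)

lemma conj_eq_iff_intertwines:
  fixes T M M' :: "'a::field^'n^'n"
  assumes "det T \<noteq> 0"
  shows "matrix_inv T ** M ** T = M' \<longleftrightarrow> M ** T = T ** M'"
  by (metis assms matrix_inv_left matrix_inv_right matrix_mul_assoc matrix_mul_lid)

lemma intertwines_matrix_inv:
  fixes T M M' :: "'a::field^'n^'n"
  assumes "det T \<noteq> 0" and "M ** T = T ** M'"
  shows "matrix_inv T ** M = M' ** matrix_inv T"
  by (metis assms conj_eq_iff_intertwines matrix_inv_right matrix_mul_assoc matrix_mul_rid)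

lemma intertwines_inverses:
  fixes T M M' :: "'a::field^'n^'n"
  assumes "det M \<noteq> 0" and "det M' \<noteq> 0" and "M ** T = T ** M'"
  shows "matrix_inv M ** T = T ** matrix_inv M'"
  by (metis assms matrix_inv_left matrix_inv_right matrix_mul_assoc matrix_mul_lid matrix_mul_rid)

lemma trace_conj:
  fixes P M :: "'a::field^'n^'n"
  assumes "det P \<noteq> 0"
  shows "trace (matrix_inv P ** M ** P) = trace M"
  by (metis assms matrix_inv_right matrix_mul_assoc matrix_mul_rid trace_mul_sym)

lemma singular_matrix_kernel:
  fixes M :: "'a::field^'n^'n"
  assumes "det M = 0"
  obtains v where "v \<noteq> 0" and "M *v v = 0"
  using assms invertible_det_nz invertible_left_inverse matrix_left_invertible_ker by metis

definition common_eigenvector :: "'a::field^'n^'n \<Rightarrow> 'a^'n^'n \<Rightarrow> bool" where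
  "common_eigenvector A B \<longleftrightarrow> (\<exists>v. v \<noteq> 0 \<and> (\<exists>a. A *v v = a *s v) \<and> (\<exists>b. B *v v = b *s v))"

lemma eigenvector_matrix_inv:
  fixes M :: "'a::field^'n^'n"
  assumes "det M \<noteq> 0" and "M *v v = c *s v"
  shows "matrix_inv M *v v = inverse c *s v"
proof -
  have v: "v = c *s (matrix_inv M *v v)"
    by (metis assms matrix_inv_left matrix_vector_mul_assoc matrix_vector_mul_lid
        vector_scalar_commute)
  show ?thesis
  proof (cases "c = 0")
    case True
    with v show ?thesis
      by simp
  next
    case False
    then show ?thesis
      by (subst (2) v) simp
  qed
qed

lemma common_eigenvector_conj:
  fixes P A B C N :: "'a::field^'n^'n"
  assumes "det P \<noteq> 0" and "A ** P = P ** C" and "B ** P = P ** N"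
    and "common_eigenvector C N"
  shows "common_eigenvector A B"
proof -
  obtain v a b where v: "v \<noteq> 0" "C *v v = a *s v" "N *v v = b *s v"
    using assms(4) unfolding common_eigenvector_def by blast
  have "P *v v \<noteq> 0"
    by (metis assms(1) invertible_det_nz inj_matrix_vector_mult injD
        matrix_vector_mult_0_right v(1))
  moreover have "A *v (P *v v) = a *s (P *v v)" "B *v (P *v v) = b *s (P *v v)"
    by (simp_all add: matrix_vector_mul_assoc assms(2,3))
      (simp_all add: matrix_vector_mul_assoc[symmetric] v vector_scalar_commute)
  ultimately show ?thesis
    unfolding common_eigenvector_def by blast
qed

definition matrix2 :: "complex \<Rightarrow> complex \<Rightarrow> complex \<Rightarrow> complex \<Rightarrow> mat2" where
  "matrix2 a b c d = (\<chi> i j. if i = 1 then (if j = 1 then a else b) else (if j = 1 then c else d))"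

definition vec2 :: "complex \<Rightarrow> complex \<Rightarrow> complex^2" where
  "vec2 p q = (\<chi> i. if i = 1 then p else q)"

lemma matrix2_cases:
  fixes M :: mat2
  obtains a b c d where "M = matrix2 a b c d"
proof
  show "M = matrix2 (M$1$1) (M$1$2) (M$2$1) (M$2$2)"
    by (simp add: matrix2_def vec_eq_iff forall_2)
qed

lemma vec2_cases:
  fixes v :: "complex^2"
  obtains p q where "v = vec2 p q"
proof
  show "v = vec2 (v$1) (v$2)"
    by (simp add: vec2_def vec_eq_iff forall_2)
qed

lemma matrix2_eq_iff [simp]:
  "matrix2 a b c d = matrix2 a' b' c' d' \<longleftrightarrow> a = a' \<and> b = b' \<and> c = c' \<and> d = d'"
  by (auto simp: matrix2_def vec_eq_iff forall_2)

lemma vec2_eq_iff [simp]: "vec2 p q = vec2 p' q' \<longleftrightarrow> p = p' \<and> q = q'"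
  by (auto simp: vec2_def vec_eq_iff forall_2)

lemma vec2_eq_0_iff [simp]: "vec2 p q = 0 \<longleftrightarrow> p = 0 \<and> q = 0"
  by (auto simp: vec2_def vec_eq_iff forall_2)

lemma matrix2_eq_0_iff [simp]: "matrix2 a b c d = 0 \<longleftrightarrow> a = 0 \<and> b = 0 \<and> c = 0 \<and> d = 0"
  by (auto simp: matrix2_def vec_eq_iff forall_2)

lemma matrix2_mult [simp]:
  "matrix2 a b c d ** matrix2 a' b' c' d' =
     matrix2 (a*a' + b*c') (a*b' + b*d') (c*a' + d*c') (c*b' + d*d')"
  by (simp add: matrix2_def vec_eq_iff forall_2 matrix_matrix_mult_def sum_2)

lemma matrix2_mult_vec2 [simp]: "matrix2 a b c d *v vec2 p q = vec2 (a*p + b*q) (c*p + d*q)"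
  by (simp add: matrix2_def vec2_def vec_eq_iff forall_2 matrix_vector_mult_def sum_2)

lemma scale_vec2 [simp]: "c *s vec2 p q = vec2 (c*p) (c*q)"
  by (simp add: vec2_def vec_eq_iff forall_2)

lemma diff_matrix2 [simp]:
  "matrix2 a b c d - matrix2 a' b' c' d' = matrix2 (a - a') (b - b') (c - c') (d - d')"
  by (simp add: matrix2_def vec_eq_iff forall_2)

lemma det_matrix2 [simp]: "det (matrix2 a b c d) = a*d - b*c"
  by (simp add: matrix2_def det_2)

lemma trace_matrix2 [simp]: "trace (matrix2 a b c d) = a + d"
  by (simp add: matrix2_def trace_def sum_2)

lemma mat_eq_matrix2: "mat x = matrix2 x 0 0 x"
  by (simp add: matrix2_def mat_def vec_eq_iff forall_2)

lemma det_mat2: "det (mat x :: mat2) = x^2"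
  by (simp add: mat_eq_matrix2 power2_eq_square)

section \<open>Schur's lemma\<close>

lemma quadratic_root_exists: "\<exists>\<mu>::complex. \<mu>^2 - t * \<mu> + D = 0"
proof
  define s where "s = csqrt (t^2 - 4 * D)"
  have "s^2 = t^2 - 4 * D"
    by (simp add: s_def)
  then show "((t + s) / 2)^2 - t * ((t + s) / 2) + D = 0"
    by (simp add: field_simps power2_eq_square) algebra
qed

lemma eigenvector_exists:
  fixes M :: mat2
  assumes "\<mu>^2 - trace M * \<mu> + det M = 0"
  obtains v where "v \<noteq> 0" and "M *v v = \<mu> *s v"
proof -
  obtain a b c d where M: "M = matrix2 a b c d"
    by (rule matrix2_cases)
  have "det (M - mat \<mu>) = 0"
    using assms by (simp add: M mat_eq_matrix2 algebra_simps power2_eq_square)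
  then obtain v where v: "v \<noteq> 0" "(M - mat \<mu>) *v v = 0"
    by (rule singular_matrix_kernel)
  obtain p q where "v = vec2 p q"
    by (rule vec2_cases)
  with v have "M *v v = \<mu> *s v"
    by (simp add: M mat_eq_matrix2 algebra_simps)
  with v(1) that show ?thesis
    by blast
qed

lemma vec2_parallel:
  assumes "vec2 p q \<noteq> 0" and "p*u = q*r"
  obtains c where "vec2 r u = c *s vec2 p q"
proof (cases "p = 0")
  case True
  with assms have "vec2 r u = (u/q) *s vec2 p q"
    by simp
  with that show ?thesis .
next
  case False
  with assms(2) have "vec2 r u = (r/p) *s vec2 p q"
    by (simp add: field_simps)
  with that show ?thesis .
qed

lemma kernel_parallel:
  fixes D :: mat2
  assumes "D \<noteq> 0" and "v \<noteq> 0" and "D *v v = 0" and "D *v w = 0"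
  obtains c where "w = c *s v"
proof -
  obtain d1 d2 d3 d4 where D: "D = matrix2 d1 d2 d3 d4"
    by (rule matrix2_cases)
  obtain p q where v: "v = vec2 p q"
    by (rule vec2_cases)
  obtain r u where w: "w = vec2 r u"
    by (rule vec2_cases)
  have eqs: "d1*p + d2*q = 0" "d3*p + d4*q = 0" "d1*r + d2*u = 0" "d3*r + d4*u = 0"
    using assms(3,4) by (simp_all add: D v w)
  have "d1 * (p*u - q*r) = 0" "d2 * (p*u - q*r) = 0" "d3 * (p*u - q*r) = 0" "d4 * (p*u - q*r) = 0"
    using eqs by algebra+
  with assms(1) have "p*u = q*r"
    by (auto simp: D)
  with assms(2) obtain c where "vec2 r u = c *s vec2 p q"
    unfolding v by (rule vec2_parallel)
  with that show ?thesis
    unfolding v w by blast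
qed

lemma commuting_singular_common_eigenvector:
  fixes A B D :: mat2
  assumes "D \<noteq> 0" and "det D = 0" and "A ** D = D ** A" and "B ** D = D ** B"
  shows "common_eigenvector A B"
proof -
  obtain v where v: "v \<noteq> 0" "D *v v = 0"
    using assms(2) by (rule singular_matrix_kernel)
  have "\<exists>c. M *v v = c *s v" if "M ** D = D ** M" for M
  proof -
    have "D *v (M *v v) = 0"
      by (metis matrix_vector_mul_assoc matrix_vector_mult_0_right that v(2))
    then show ?thesis
      using kernel_parallel[OF assms(1) v] by metis
  qed
  with v(1) assms(3,4) show ?thesis
    unfolding common_eigenvector_def by blast
qed

lemma commutant_scalar:
  fixes A B S :: mat2
  assumes "\<not> common_eigenvector A B" and "A ** S = S ** A" and "B ** S = S ** B"
  obtains \<mu> where "S = mat \<mu>"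
proof -
  obtain \<mu> where \<mu>: "\<mu>^2 - trace S * \<mu> + det S = 0"
    using quadratic_root_exists by blast
  obtain a b c d where S: "S = matrix2 a b c d"
    by (rule matrix2_cases)
  have "det (S - mat \<mu>) = 0"
    using \<mu> by (simp add: S mat_eq_matrix2 algebra_simps power2_eq_square)
  moreover have "M ** (S - mat \<mu>) = (S - mat \<mu>) ** M" if "M ** S = S ** M" for M
    using that by (simp add: matrix_diff_ldistrib matrix_diff_rdistrib mat_mult_commute)
  ultimately have "S - mat \<mu> = 0"
    using commuting_singular_common_eigenvector assms by blast
  with that show ?thesis
    by simp
qed

lemma intertwiners_unique_up_to_sign:
  fixes A B A' B' T T' :: mat2
  assumes "\<not> common_eigenvector A B" and "det T = 1" and "det T' = 1"
    and "A ** T = T ** A'" and "B ** T = T ** B'"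
    and "A ** T' = T' ** A'" and "B ** T' = T' ** B'"
  shows "T' = T \<or> T' = - T"
proof -
  define S where "S = T' ** matrix_inv T"
  have "M ** S = S ** M" if "M ** T = T ** M'" and "M ** T' = T' ** M'" for M M'
    using intertwines_matrix_inv[of T M M'] that assms(2)
    by (simp add: S_def matrix_mul_assoc) (simp add: matrix_mul_assoc[symmetric])
  with assms(1,4-7) obtain \<mu> where \<mu>: "S = mat \<mu>"
    by (metis commutant_scalar)
  have "T' = S ** T"
    by (simp add: S_def matrix_mul_assoc[symmetric] matrix_inv_left assms(2))
  moreover have "\<mu>^2 = 1"
    using assms(2,3) \<open>T' = S ** T\<close> by (simp add: det_mul \<mu> det_mat2)
  then have "\<mu> = 1 \<or> \<mu> = -1"
    by (simp add: power2_eq_1_iff)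
  ultimately show ?thesis
    by (auto simp: \<mu> mat_neg_one_mult)
qed

section \<open>Normal form of a pair without common eigenvector\<close>

(* The matrices of A and B in the basis (v, A v), where B v = mu v and x, y, z stand for
   tr A, tr B, tr AB. *)
definition normal_form_A :: "complex \<Rightarrow> mat2" where
  "normal_form_A x = matrix2 0 (-1) 1 x"

definition normal_form_B :: "complex \<Rightarrow> complex \<Rightarrow> complex \<Rightarrow> complex \<Rightarrow> mat2" where
  "normal_form_B x y z \<mu> = matrix2 \<mu> (x*\<mu> + z - x*y) 0 (y - \<mu>)"

lemma normal_form_exists:
  fixes A B :: mat2
  assumes "det A = 1" and "det B = 1" and "\<not> common_eigenvector A B"
    and "\<mu>^2 - trace B * \<mu> + 1 = 0"
  obtains P where "det P \<noteq> 0"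
    and "A ** P = P ** normal_form_A (trace A)"
    and "B ** P = P ** normal_form_B (trace A) (trace B) (trace (A ** B)) \<mu>"
proof -
  obtain v where v: "v \<noteq> 0" "B *v v = \<mu> *s v"
    using assms(2,4) eigenvector_exists[of \<mu> B] by auto
  obtain a b c d where A: "A = matrix2 a b c d"
    by (rule matrix2_cases)
  obtain e f g h where B: "B = matrix2 e f g h"
    by (rule matrix2_cases)
  obtain p q where vpq: "v = vec2 p q"
    by (rule vec2_cases)
  define P where "P = matrix2 p (a*p + b*q) q (c*p + d*q)"
  have detA: "a*d - b*c = 1"
    using assms(1) by (simp add: A)
  have Bv: "e*p + f*q = \<mu>*p" "g*p + h*q = \<mu>*q"
    using v(2) by (simp_all add: B vpq)
  have "det P \<noteq> 0"
  proof
    assume "det P = 0"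
    then have "p * (c*p + d*q) = q * (a*p + b*q)"
      by (simp add: P_def)
    with v(1) obtain c' where "vec2 (a*p + b*q) (c*p + d*q) = c' *s vec2 p q"
      unfolding vpq by (rule vec2_parallel)
    then have "A *v v = c' *s v"
      by (simp only: A vpq matrix2_mult_vec2)
    with v assms(3) show False
      unfolding common_eigenvector_def by blast
  qed
  moreover have "A ** P = P ** normal_form_A (trace A)"
    unfolding A P_def normal_form_A_def matrix2_mult trace_matrix2 matrix2_eq_iff
    using detA by algebra
  moreover have "B ** P = P ** normal_form_B (trace A) (trace B) (trace (A ** B)) \<mu>"
    unfolding A B P_def normal_form_B_def matrix2_mult trace_matrix2 matrix2_eq_iff
    using Bv by algebra
  ultimately show ?thesis
    using that by blast
qed

lemma conjugate_if_same_traces: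
  fixes A B A' B' :: mat2
  assumes "det A = 1" and "det B = 1" and "\<not> common_eigenvector A B"
    and "det A' = 1" and "det B' = 1" and "\<not> common_eigenvector A' B'"
    and "trace A' = trace A" and "trace B' = trace B" and "trace (A' ** B') = trace (A ** B)"
  obtains T where "det T = 1" and "A ** T = T ** A'" and "B ** T = T ** B'"
proof -
  obtain \<mu> where \<mu>: "\<mu>^2 - trace B * \<mu> + 1 = 0"
    using quadratic_root_exists by blast
  define C N where "C = normal_form_A (trace A)"
    and "N = normal_form_B (trace A) (trace B) (trace (A ** B)) \<mu>"
  obtain P where P: "det P \<noteq> 0" "A ** P = P ** C" "B ** P = P ** N"
    using normal_form_exists[OF assms(1-3) \<mu>] unfolding C_def N_def by blast
  obtain P' where P': "det P' \<noteq> 0" "A' ** P' = P' ** C" "B' ** P' = P' ** N"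
    using normal_form_exists[OF assms(4-6), of \<mu>] \<mu> assms(7-9)
    unfolding C_def N_def by auto
  define T0 where "T0 = P ** matrix_inv P'"
  have T0: "M ** T0 = T0 ** M'" if "M ** P = P ** K" and "M' ** P' = P' ** K" for M M' K
    using intertwines_matrix_inv[OF P'(1) that(2)] that(1)
    by (simp add: T0_def matrix_mul_assoc) (simp add: matrix_mul_assoc[symmetric])
  have "det T0 \<noteq> 0"
    using P(1) P'(1) by (simp add: T0_def det_mul det_matrix_inv)
  define s where "s = csqrt (det T0)"
  have "s^2 = det T0" "s \<noteq> 0"
    using \<open>det T0 \<noteq> 0\<close> by (auto simp: s_def)
  define T where "T = mat (inverse s) ** T0"
  have "det T = 1"
    using \<open>s^2 = det T0\<close> \<open>det T0 \<noteq> 0\<close> by (simp add: T_def det_mul det_mat2 power_inverse)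
  moreover have "M ** T = T ** M'" if "M ** T0 = T0 ** M'" for M M'
    using that by (metis T_def mat_mult_commute matrix_mul_assoc)
  ultimately show ?thesis
    using that T0[OF P(2) P'(2)] T0[OF P(3) P'(3)] by blast
qed

lemma common_eigenvector_upper_triangular:
  assumes "(\<mu> - m)^2 - x*k*(\<mu> - m) + k^2 = 0"
  shows "common_eigenvector (matrix2 0 (-1) 1 x) (matrix2 \<mu> k 0 m)"
proof (cases "k = 0")
  case True
  with assms have "m = \<mu>"
    by simp
  obtain l where "l^2 - x*l + 1 = 0"
    using quadratic_root_exists by blast
  then obtain v where "v \<noteq> 0" "matrix2 0 (-1) 1 x *v v = l *s v"
    using eigenvector_exists[of l "matrix2 0 (-1) 1 x"] by auto
  moreover have "matrix2 \<mu> k 0 m *v v = \<mu> *s v"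
  proof -
    obtain p q where "v = vec2 p q"
      by (rule vec2_cases)
    with True \<open>m = \<mu>\<close> show ?thesis
      by simp
  qed
  ultimately show ?thesis
    unfolding common_eigenvector_def by blast
next
  case False
  define l where "l = (\<mu> - m) / k"
  have kl: "k*l = \<mu> - m"
    using False by (simp add: l_def)
  have "k^2 * (l^2 - x*l + 1) = 0"
    using assms kl by algebra
  with False have "l^2 - x*l + 1 = 0"
    by simp
  then have "matrix2 0 (-1) 1 x *v vec2 1 (-l) = l *s vec2 1 (-l)"
    by (simp add: algebra_simps power2_eq_square)
  moreover have "matrix2 \<mu> k 0 m *v vec2 1 (-l) = m *s vec2 1 (-l)"
    using kl by (simp add: algebra_simps)
  ultimately show ?thesis
    unfolding common_eigenvector_def by (metis vec2_eq_0_iff zero_neq_one)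
qed

lemma trace_orthogonal_normal_form:
  fixes X :: mat2
  assumes "\<not> common_eigenvector (normal_form_A x) (normal_form_B x y z \<mu>)"
    and "trace X = 0" and "trace (normal_form_A x ** X) = 0"
    and "trace (normal_form_B x y z \<mu> ** X) = 0"
    and "trace (normal_form_A x ** normal_form_B x y z \<mu> ** X) = 0"
  shows "X = 0"
proof -
  define k m where "k = x*\<mu> + z - x*y" and "m = y - \<mu>"
  have N: "normal_form_B x y z \<mu> = matrix2 \<mu> k 0 m"
    by (simp add: normal_form_B_def k_def m_def)
  have Q: "(\<mu> - m)^2 - x*k*(\<mu> - m) + k^2 \<noteq> 0"
    using assms(1) common_eigenvector_upper_triangular by (auto simp: N normal_form_A_def)
  obtain x1 x2 x3 x4 where X: "X = matrix2 x1 x2 x3 x4"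
    by (rule matrix2_cases)
  have h: "x1 + x4 = 0" "x2 - x3 + x*x4 = 0" "\<mu>*x1 + k*x3 + m*x4 = 0"
    "\<mu>*x2 - m*x3 + (k + x*m)*x4 = 0"
    using assms(2-5) by (simp_all add: X N normal_form_A_def algebra_simps)
  \<comment> \<open>Eliminating x4 and x2 leaves a linear system in x1, x3 whose determinant is Q.\<close>
  have "((\<mu> - m)^2 - x*k*(\<mu> - m) + k^2) * x1 = 0" "((\<mu> - m)^2 - x*k*(\<mu> - m) + k^2) * x3 = 0"
    using h by algebra+
  with Q have "x1 = 0" "x3 = 0"
    by simp_all
  with h show "X = 0"
    by (simp add: X)
qed

lemma trace_orthogonal_imp_zero:
  fixes A B T :: mat2
  assumes "det A = 1" and "det B = 1" and "\<not> common_eigenvector A B"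
    and "trace T = 0" and "trace (A ** T) = 0" and "trace (B ** T) = 0"
    and "trace (A ** B ** T) = 0"
  shows "T = 0"
proof -
  obtain \<mu> where \<mu>: "\<mu>^2 - trace B * \<mu> + 1 = 0"
    using quadratic_root_exists by blast
  define C N where "C = normal_form_A (trace A)"
    and "N = normal_form_B (trace A) (trace B) (trace (A ** B)) \<mu>"
  obtain P where P: "det P \<noteq> 0" "A ** P = P ** C" "B ** P = P ** N"
    using normal_form_exists[OF assms(1-3) \<mu>] unfolding C_def N_def by blast
  have AB: "A ** B ** P = P ** (C ** N)"
    by (metis P(2,3) matrix_mul_assoc)
  define X where "X = matrix_inv P ** T ** P"
  have trace_X: "trace (M' ** X) = trace (M ** T)" if "M ** P = P ** M'" for M M'
  proof -
    have "M' ** X = matrix_inv P ** (M ** T) ** P"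
      using intertwines_matrix_inv[OF P(1) that] by (simp add: X_def matrix_mul_assoc)
    then show ?thesis
      by (simp add: trace_conj P(1))
  qed
  have "\<not> common_eigenvector C N"
    using common_eigenvector_conj P assms(3) by blast
  moreover have "trace X = 0" "trace (C ** X) = 0" "trace (N ** X) = 0" "trace (C ** N ** X) = 0"
    using assms(4-7) trace_conj[OF P(1)] trace_X[OF P(2)] trace_X[OF P(3)] trace_X[OF AB]
    by (simp_all add: X_def matrix_mul_assoc)
  ultimately have "matrix_inv P ** T ** P = 0"
    using trace_orthogonal_normal_form unfolding C_def N_def X_def by blast
  then have "T ** P = 0"
    using P(1) by (simp add: conj_eq_iff_intertwines)
  then have "T ** P ** matrix_inv P = 0"
    by simp
  then show "T = 0"
    by (simp add: matrix_mul_assoc[symmetric] matrix_inv_right P(1))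
qed

section \<open>Representations of the free group\<close>

lemma rep_Nil [simp]: "rep A B [] = mat 1"
  by (simp add: rep_def)

lemma rep_Cons [simp]: "rep A B (l # w) = rep_letter A B l ** rep A B w"
  by (simp add: rep_def)

lemma rep_append: "rep A B (u @ v) = rep A B u ** rep A B v"
  by (induction u) (simp_all add: matrix_mul_assoc)

lemma rep_word_a [simp]: "rep A B word_a = A"
  by (simp add: word_a_def rep_letter_def)

lemma rep_word_b [simp]: "rep A B word_b = B"
  by (simp add: word_b_def rep_letter_def)

context
  fixes A B :: mat2
  assumes det_A: "det A = 1" and det_B: "det B = 1"
begin

lemma det_rep_letter: "det (rep_letter A B l) = 1"
  by (simp add: rep_letter_def Let_def det_matrix_inv det_A det_B)

lemma det_rep: "det (rep A B w) = 1"
  by (induction w) (simp_all add: det_mul det_rep_letter)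

lemma rep_letter_inv_letter: "rep_letter A B (inv_letter l) = matrix_inv (rep_letter A B l)"
  by (auto simp: rep_letter_def inv_letter_def Let_def matrix_inv_matrix_inv det_A det_B)

lemma rep_fred: "rep A B (fred w) = rep A B w"
proof (induction w)
  case Nil
  then show ?case
    by simp
next
  case (Cons x xs)
  have cancel: "rep_letter A B x ** (rep_letter A B (inv_letter x) ** M) = M" for M
    by (simp add: matrix_mul_assoc rep_letter_inv_letter matrix_inv_right det_rep_letter)
  show ?case
    using Cons.IH[symmetric] by (auto simp: cancel split: list.split)
qed

lemma rep_inv_word: "rep A B (inv_word u) = matrix_inv (rep A B u)"
proof (rule matrix_inv_unique[symmetric])
  show "det (rep A B u) \<noteq> 0"
    by (simp add: det_rep)
  show "rep A B u ** rep A B (inv_word u) = mat 1"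
  proof (induction u)
    case Nil
    then show ?case
      by (simp add: inv_word_def)
  next
    case (Cons l u)
    have "inv_word (l # u) = inv_word u @ [inv_letter l]"
      by (simp add: inv_word_def)
    then have "rep A B (l # u) ** rep A B (inv_word (l # u)) =
        rep_letter A B l ** (rep A B u ** rep A B (inv_word u)) ** rep_letter A B (inv_letter l)"
      by (simp add: rep_append matrix_mul_assoc)
    with Cons.IH show ?case
      by (simp add: rep_letter_inv_letter matrix_inv_right det_rep_letter)
  qed
qed

lemma rep_subst: "rep A B (subst wa wb w) = rep (rep A B wa) (rep A B wb) w"
proof (induction w)
  case Nil
  then show ?case
    by (simp add: subst_def)
next
  case (Cons l w)
  have "subst wa wb (l # w) =
      (let img = (if fst l = Ga then wa else wb) in if snd l then img else inv_word img)
      @ subst wa wb w"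
    by (simp add: subst_def)
  with Cons.IH show ?case
    by (auto simp: rep_append Let_def rep_letter_def rep_inv_word)
qed

lemma eigenvector_rep:
  assumes "A *v v = a *s v" and "B *v v = b *s v"
  shows "\<exists>c. rep A B w *v v = c *s v"
proof (induction w)
  case Nil
  then show ?case
    by (intro exI[of _ 1]) simp
next
  case (Cons l w)
  then obtain c where c: "rep A B w *v v = c *s v"
    by blast
  have "\<exists>c'. rep_letter A B l *v v = c' *s v"
    using assms eigenvector_matrix_inv[of A v a] eigenvector_matrix_inv[of B v b] det_A det_B
    by (auto simp: rep_letter_def Let_def)
  then obtain c' where c': "rep_letter A B l *v v = c' *s v"
    by blast
  have "rep A B (l # w) *v v = (c' * c) *s v"
    by (simp add: matrix_vector_mul_assoc[symmetric] c c' vector_scalar_commute)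
  then show ?case
    by blast
qed

lemma irreducible_rep_imp_no_common_eigenvector:
  assumes "irreducible_rep A B"
  shows "\<not> common_eigenvector A B"
  using assms eigenvector_rep unfolding common_eigenvector_def irreducible_rep_def by blast

end

lemma no_common_eigenvector_free_aut:
  fixes A B :: mat2
  assumes "det A = 1" and "det B = 1" and "is_free_aut wa wb"
    and "\<not> common_eigenvector A B"
  shows "\<not> common_eigenvector (rep A B wa) (rep A B wb)"
proof
  assume "common_eigenvector (rep A B wa) (rep A B wb)"
  then obtain v a b where v: "v \<noteq> 0" "rep A B wa *v v = a *s v" "rep A B wb *v v = b *s v"
    unfolding common_eigenvector_def by blast
  obtain va vb where "fred (subst wa wb va) = word_a" and "fred (subst wa wb vb) = word_b"
    using assms(3) unfolding is_free_aut_def by blast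
  then have "A = rep (rep A B wa) (rep A B wb) va" and "B = rep (rep A B wa) (rep A B wb) vb"
    by (metis assms(1,2) rep_fred rep_subst rep_word_a rep_word_b)+
  moreover note eigenvector_rep[OF det_rep[OF assms(1,2)] det_rep[OF assms(1,2)] v(2,3)]
  ultimately have "\<exists>c. A *v v = c *s v" and "\<exists>c. B *v v = c *s v"
    by metis+
  with v(1) assms(4) show False
    unfolding common_eigenvector_def by blast
qed

lemma intertwines_rep:
  fixes A B A' B' T :: mat2
  assumes "det A = 1" and "det B = 1" and "det A' = 1" and "det B' = 1"
    and "A ** T = T ** A'" and "B ** T = T ** B'"
  shows "rep A B w ** T = T ** rep A' B' w"
proof (induction w)
  case Nil
  then show ?case
    by simp
next
  case (Cons l w)
  have letter: "rep_letter A B l ** T = T ** rep_letter A' B' l"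
    using assms intertwines_inverses[of A A' T] intertwines_inverses[of B B' T]
    by (auto simp: rep_letter_def Let_def)
  have "rep A B (l # w) ** T = rep_letter A B l ** (rep A B w ** T)"
    by (simp add: matrix_mul_assoc)
  also have "\<dots> = (rep_letter A B l ** T) ** rep A' B' w"
    by (simp add: Cons.IH matrix_mul_assoc)
  also have "\<dots> = T ** rep A' B' (l # w)"
    by (simp add: letter matrix_mul_assoc)
  finally show ?case .
qed

lemma conj_rep_iff_intertwines_generators:
  fixes A B A' B' T :: mat2
  assumes "det A = 1" and "det B = 1" and "det A' = 1" and "det B' = 1" and "det T \<noteq> 0"
  shows "(\<forall>w. matrix_inv T ** rep A B w ** T = rep A' B' w) \<longleftrightarrow>
    A ** T = T ** A' \<and> B ** T = T ** B'"
proof -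
  have "(\<forall>w. matrix_inv T ** rep A B w ** T = rep A' B' w) \<longleftrightarrow>
      (\<forall>w. rep A B w ** T = T ** rep A' B' w)"
    using assms(5) by (simp add: conj_eq_iff_intertwines)
  also have "\<dots> \<longleftrightarrow> A ** T = T ** A' \<and> B ** T = T ** B'"
    using intertwines_rep[OF assms(1-4)] by (metis rep_word_a rep_word_b)
  finally show ?thesis .
qed

theorem lemma3p8:
  fixes wa wb :: word and A B :: mat2
  assumes "hyperbolic_monodromy wa wb"
    and "A \<in> SL2" and "B \<in> SL2"
    and "irreducible_rep A B"
    and "char_fixed wa wb A B"
  shows "\<exists>T \<in> SL2.
           (\<forall>w. matrix_inv T ** rep A B w ** T = rep A B (subst wa wb w)) \<and>
           (\<forall>T' \<in> SL2. (\<forall>w. matrix_inv T' ** rep A B w ** T' = rep A B (subst wa wb w))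
                \<longrightarrow> T' = T \<or> T' = - T) \<and>
           (trace T \<noteq> 0 \<or> trace (A ** T) \<noteq> 0 \<or> trace (B ** T) \<noteq> 0 \<or> trace (A ** B ** T) \<noteq> 0)"
proof -
  have det_A: "det A = 1" and det_B: "det B = 1"
    using assms(2,3) by (simp_all add: SL2_def)
  define A' B' where "A' = rep A B wa" and "B' = rep A B wb"
  have det': "det A' = 1" "det B' = 1"
    and rep_phi: "rep A B (subst wa wb w) = rep A' B' w" for w
    by (simp_all add: A'_def B'_def det_rep rep_subst det_A det_B)
  have irr: "\<not> common_eigenvector A B"
    using irreducible_rep_imp_no_common_eigenvector det_A det_B assms(4) by blast
  have irr': "\<not> common_eigenvector A' B'"
    using no_common_eigenvector_free_aut det_A det_B assms(1) irr
    unfolding A'_def B'_def hyperbolic_monodromy_def by blast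
  have traces: "trace (rep A' B' w) = trace (rep A B w)" for w
    using assms(5) by (simp add: char_fixed_def rep_phi)
  obtain T where T: "det T = 1" "A ** T = T ** A'" "B ** T = T ** B'"
    using conjugate_if_same_traces[OF det_A det_B irr det' irr']
      traces[of word_a] traces[of word_b] traces[of "word_a @ word_b"]
    by (auto simp: rep_append)
  have conj_iff: "(\<forall>w. matrix_inv T' ** rep A B w ** T' = rep A B (subst wa wb w)) \<longleftrightarrow>
      A ** T' = T' ** A' \<and> B ** T' = T' ** B'" if "T' \<in> SL2" for T'
    using that conj_rep_iff_intertwines_generators[OF det_A det_B det']
    by (simp add: SL2_def rep_phi)
  have "trace T \<noteq> 0 \<or> trace (A ** T) \<noteq> 0 \<or> trace (B ** T) \<noteq> 0 \<or> trace (A ** B ** T) \<noteq> 0"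
    using trace_orthogonal_imp_zero[OF det_A det_B irr, of T] T(1) by (auto simp: det_2)
  moreover have "T' = T \<or> T' = - T"
    if "T' \<in> SL2" and "A ** T' = T' ** A'" and "B ** T' = T' ** B'" for T'
    using intertwiners_unique_up_to_sign[OF irr T(1) _ T(2,3)] that by (simp add: SL2_def)
  ultimately show ?thesis
    using T conj_iff unfolding SL2_def by blast
qed

end
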